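(* Let $\ell\ge2$, $C\subseteq\mathbb{F}_q^n$ a linear code and $(A,B)$ an $\ell$-power $t$-error locating pair for $C$. Let $\mathbf{y}=\mathbf{c}+\mathbf{e}$ with $\mathbf{c}\in C$, $\mathrm{w}(\mathbf{e})=t$, $I_{\mathbf{e}}=\mathrm{supp}(\mathbf{e})$, and for $i=1,\dots,\ell$ let $\mathbf{e}^{(i)}=\sum_{h=1}^{i}\binom{i}{h}\mathbf{c}^{i-h}*\mathbf{e}^{h}$ (so that $\mathbf{y}^i=\mathbf{c}^i+\mathbf{e}^{(i)}$). Let $M_1=\{\mathbf{a}\in A\mid \langle \mathbf{a}*\mathbf{y},\mathbf{b}\rangle=0\ \forall \mathbf{b}\in B\}$, $M_i=\{\mathbf{a}\in A\mid \langle \mathbf{a}*\mathbf{y}^i,\mathbf{v}\rangle=0\ \forall \mathbf{v}\in (B^{\perp}*C^{i-1})^{\perp}\}$ for $2\le i\le\ell$, and $M=\bigcap_{i=1}^\ell M_i$. Then $$M_{I_{\mathbf{e}}}=\big((\mathbf{e}^{(1)}*B)_{I_{\mathbf{e}}}\big)^{\perp}\cap\bigcap_{i=2}^{\ell}\big((\mathbf{e}^{(i)}*(B^\perp*C^{i-1})^\perp)_{I_{\mathbf{e}}}\big)^{\perp},$$ with duals taken in $\mathbb{F}_q^{|I_{\mathbf{e}}|}$.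
   Context: All codes are $\mathbb{F}_q$-linear subspaces of $\mathbb{F}_q^n$. $\mathbf{u}*\mathbf{v}=(u_1v_1,\dots,u_nv_n)$, $\mathbf{u}^i=(u_1^i,\dots,u_n^i)$ with $\mathbf{u}^0=(1,\dots,1)$; $A*B$ is the span of all $\mathbf{a}*\mathbf{b}$; $C^1=C$, $C^i=C*C^{i-1}$; $\mathbf{u}*X=\{\mathbf{u}*\mathbf{x}:\mathbf{x}\in X\}$. $\langle\mathbf{u},\mathbf{v}\rangle=\sum_iu_iv_i$, $X^\perp$ the dual. $\mathrm{w}$ Hamming weight, $\mathrm{d}$ minimum distance, $\mathrm{supp}(\mathbf{x})=\{i:x_i\ne0\}$. For $J=\{j_1<\dots<j_s\}$, $X_J=\{(x_{j_1},\dots,x_{j_s}):\mathbf{x}\in X\}$. A pair $(A,B)$ is an $\ell$-power $t$-error locating pair for $C$ if: (1) $A*B\subseteq C^\perp$; (2) $\dim A>t$; (3) $\mathrm{d}(A^\perp)>t$; (4) $\mathrm{d}(A)+\mathrm{d}(C)>n$; (5) $\dim B+\sum_{i=2}^{\ell}\dim (B^\perp*C^{i-1})^\perp\ge t$. *)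

theory Defs
  imports Main "HOL-Library.Extended_Nat"
begin

text \<open>Vectors of F_q^n are modelled as functions nat => 'a vanishing outside {..<n}.\<close>

definition vecs :: "nat \<Rightarrow> (nat \<Rightarrow> 'a::field) set" where
  "vecs n = {x. \<forall>i. n \<le> i \<longrightarrow> x i = 0}"

definition is_code :: "nat \<Rightarrow> (nat \<Rightarrow> 'a::field) set \<Rightarrow> bool" where
  "is_code n X \<longleftrightarrow> X \<subseteq> vecs n \<and> (\<lambda>_. 0) \<in> X \<and>
     (\<forall>x\<in>X. \<forall>y\<in>X. (\<lambda>i. x i + y i) \<in> X) \<and>
     (\<forall>c. \<forall>x\<in>X. (\<lambda>i. c * x i) \<in> X)"

definition lspan :: "nat \<Rightarrow> (nat \<Rightarrow> 'a::field) set \<Rightarrow> (nat \<Rightarrow> 'a) set" where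
  "lspan n S = \<Inter>{V. is_code n V \<and> S \<subseteq> V}"

definition cdim :: "nat \<Rightarrow> (nat \<Rightarrow> 'a::field) set \<Rightarrow> nat" where
  "cdim n X = (LEAST k. \<exists>S. finite S \<and> card S = k \<and> S \<subseteq> X \<and> lspan n S = X)"

definition star :: "(nat \<Rightarrow> 'a::field) \<Rightarrow> (nat \<Rightarrow> 'a) \<Rightarrow> (nat \<Rightarrow> 'a)" where
  "star u v = (\<lambda>i. u i * v i)"

definition vpow :: "nat \<Rightarrow> (nat \<Rightarrow> 'a::field) \<Rightarrow> nat \<Rightarrow> (nat \<Rightarrow> 'a)" where
  "vpow n u k = (\<lambda>j. if j < n then u j ^ k else 0)"

definition starset :: "nat \<Rightarrow> (nat \<Rightarrow> 'a::field) set \<Rightarrow> (nat \<Rightarrow> 'a) set \<Rightarrow> (nat \<Rightarrow> 'a) set" where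
  "starset n A B = lspan n {star a b | a b. a \<in> A \<and> b \<in> B}"

fun cpow :: "nat \<Rightarrow> (nat \<Rightarrow> 'a::field) set \<Rightarrow> nat \<Rightarrow> (nat \<Rightarrow> 'a) set" where
  "cpow n C 0 = lspan n {vpow n (\<lambda>_. 0) 0}"
| "cpow n C (Suc 0) = C"
| "cpow n C (Suc (Suc k)) = starset n C (cpow n C (Suc k))"

definition inner_n :: "nat \<Rightarrow> (nat \<Rightarrow> 'a::field) \<Rightarrow> (nat \<Rightarrow> 'a) \<Rightarrow> 'a" where
  "inner_n n u v = (\<Sum>i<n. u i * v i)"

definition dual :: "nat \<Rightarrow> (nat \<Rightarrow> 'a::field) set \<Rightarrow> (nat \<Rightarrow> 'a) set" where
  "dual n X = {x \<in> vecs n. \<forall>y\<in>X. inner_n n x y = 0}"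

definition weight :: "nat \<Rightarrow> (nat \<Rightarrow> 'a::field) \<Rightarrow> nat" where
  "weight n x = card {i. i < n \<and> x i \<noteq> 0}"

definition supp :: "nat \<Rightarrow> (nat \<Rightarrow> 'a::field) \<Rightarrow> nat set" where
  "supp n x = {i. i < n \<and> x i \<noteq> 0}"

text \<open>Minimum distance; the zero code has minimum distance infinity.\<close>
definition mindist :: "nat \<Rightarrow> (nat \<Rightarrow> 'a::field) set \<Rightarrow> enat" where
  "mindist n X = (INF x \<in> X - {\<lambda>_. 0}. enat (weight n x))"

text \<open>Puncturing X_J: keep coordinates in J (others set to 0); F_q^{|J|} is
  identified with functions vanishing outside J.\<close>
definition punct :: "nat set \<Rightarrow> (nat \<Rightarrow> 'a::field) set \<Rightarrow> (nat \<Rightarrow> 'a) set" where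
  "punct J X = (\<lambda>x. \<lambda>j. if j \<in> J then x j else 0) ` X"

definition dual_on :: "nat set \<Rightarrow> (nat \<Rightarrow> 'a::field) set \<Rightarrow> (nat \<Rightarrow> 'a) set" where
  "dual_on J X = {x. (\<forall>j. j \<notin> J \<longrightarrow> x j = 0) \<and> (\<forall>y\<in>X. (\<Sum>j\<in>J. x j * y j) = 0)}"

definition Wsp :: "nat \<Rightarrow> (nat \<Rightarrow> 'a::field) set \<Rightarrow> (nat \<Rightarrow> 'a) set \<Rightarrow> nat \<Rightarrow> (nat \<Rightarrow> 'a) set" where
  "Wsp n C B i = dual n (starset n (dual n B) (cpow n C (i - 1)))"

definition power_ELP ::
  "nat \<Rightarrow> (nat \<Rightarrow> 'a::field) set \<Rightarrow> (nat \<Rightarrow> 'a) set \<Rightarrow> (nat \<Rightarrow> 'a) set \<Rightarrow> nat \<Rightarrow> nat \<Rightarrow> bool" where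
  "power_ELP n C A B l t \<longleftrightarrow>
     is_code n A \<and> is_code n B \<and>
     starset n A B \<subseteq> dual n C \<and>
     cdim n A > t \<and>
     mindist n (dual n A) > enat t \<and>
     mindist n A + mindist n C > enat n \<and>
     cdim n B + (\<Sum>i=2..l. cdim n (Wsp n C B i)) \<ge> t"

definition epow :: "nat \<Rightarrow> (nat \<Rightarrow> 'a::field) \<Rightarrow> (nat \<Rightarrow> 'a) \<Rightarrow> nat \<Rightarrow> (nat \<Rightarrow> 'a)" where
  "epow n c e i = (\<lambda>j. \<Sum>h=1..i. of_nat (i choose h) * vpow n c (i - h) j * vpow n e h j)"

end

theory Submission
  imports Defs
begin

text \<open>Write y^i = c^i + e^(i). Because A * B \<subseteq> C^\<bottom>, the codeword part is invisible to
  every condition defining M: \<langle>a * c, b\<rangle> = 0, and for i \<ge> 2 we have a * c^i = (a * c) * c^(i-1)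
  with a * c \<in> B^\<bottom> and c^(i-1) \<in> C^(i-1), so a * c^i is orthogonal to (B^\<bottom> * C^(i-1))^\<bottom>.
  Since every e^(i) is supported on I, membership of a in M then depends only on a_I, through
  exactly the dual conditions on the right-hand side. It remains that puncturing A on I is
  onto F^I: otherwise some functional supported on I kills A_I without vanishing, i.e. there is
  a nonzero word of A^\<bottom> of weight at most |I| = t < d(A^\<bottom>).\<close>

definition vecs_on :: "nat set \<Rightarrow> (nat \<Rightarrow> 'a::zero) set" where
  "vecs_on J = {x. \<forall>j. j \<notin> J \<longrightarrow> x j = 0}"

definition proj_on :: "nat set \<Rightarrow> (nat \<Rightarrow> 'a::zero) \<Rightarrow> nat \<Rightarrow> 'a" where
  "proj_on J x = (\<lambda>j. if j \<in> J then x j else 0)"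

lemma punct_eq_image_proj_on: "punct J X = proj_on J ` X"
  by (simp add: punct_def proj_on_def)

lemma proj_on_in_vecs_on: "proj_on J x \<in> vecs_on J"
  by (simp add: proj_on_def vecs_on_def)

lemma dual_on_subset_vecs_on: "dual_on J X \<subseteq> vecs_on J"
  by (auto simp: dual_on_def vecs_on_def)

lemma is_code_zero: "is_code n X \<Longrightarrow> (\<lambda>_. 0) \<in> X"
  by (simp add: is_code_def)

lemma is_code_add: "is_code n X \<Longrightarrow> x \<in> X \<Longrightarrow> y \<in> X \<Longrightarrow> (\<lambda>i. x i + y i) \<in> X"
  by (simp add: is_code_def)

lemma is_code_smult: "is_code n X \<Longrightarrow> x \<in> X \<Longrightarrow> (\<lambda>i. c * x i) \<in> X"
  by (simp add: is_code_def)

lemma is_code_add_smult: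
  "is_code n X \<Longrightarrow> x \<in> X \<Longrightarrow> y \<in> X \<Longrightarrow> (\<lambda>i. x i + c * y i) \<in> X"
  by (intro is_code_add is_code_smult)

lemma dual_on_orth: "z \<in> dual_on J X \<Longrightarrow> y \<in> X \<Longrightarrow> (\<Sum>j\<in>J. z j * y j) = 0"
  by (simp add: dual_on_def)

lemma dual_on_vanishes: "z \<in> dual_on J X \<Longrightarrow> j \<notin> J \<Longrightarrow> z j = 0"
  by (simp add: dual_on_def)

lemma sum_insert_pivot:
  fixes z w u :: "nat \<Rightarrow> 'a::field"
  assumes "finite J" and "k \<notin> J"
  shows "(\<Sum>j\<in>insert k J. (z(k := - (\<Sum>i\<in>J. z i * w i))) j * u j) =
    (\<Sum>j\<in>J. z j * (u j - u k * w j))"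
proof -
  have "(\<Sum>j\<in>J. (z(k := - (\<Sum>i\<in>J. z i * w i))) j * u j) = (\<Sum>j\<in>J. z j * u j)"
    using assms(2) by (intro sum.cong) auto
  then have "(\<Sum>j\<in>insert k J. (z(k := - (\<Sum>i\<in>J. z i * w i))) j * u j) =
      (\<Sum>j\<in>J. z j * u j) - u k * (\<Sum>i\<in>J. z i * w i)"
    using assms by (simp add: mult.commute)
  also have "\<dots> = (\<Sum>j\<in>J. z j * (u j - u k * w j))"
    by (simp add: right_diff_distrib sum_subtractf sum_distrib_left mult.left_commute)
  finally show ?thesis .
qed

lemma dual_on_insert_pivot:
  fixes V :: "(nat \<Rightarrow> 'a::field) set"
  assumes "finite J" and "k \<notin> J" and V: "is_code n V" and w: "w \<in> V" "w k = 1"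
    and z: "z \<in> dual_on J {v \<in> V. v k = 0}"
  shows "z(k := - (\<Sum>i\<in>J. z i * w i)) \<in> dual_on (insert k J) V"
  unfolding dual_on_def
proof (intro CollectI conjI allI impI ballI)
  fix j assume "j \<notin> insert k J"
  then show "(z(k := - (\<Sum>i\<in>J. z i * w i))) j = 0"
    using dual_on_vanishes[OF z] by simp
next
  fix v assume "v \<in> V"
  then have "(\<lambda>j. v j + (- v k) * w j) \<in> V"
    using V w(1) by (intro is_code_add_smult)
  then have "(\<lambda>j. v j - v k * w j) \<in> {v \<in> V. v k = 0}"
    using w(2) by simp
  then have "(\<Sum>j\<in>J. z j * (v j - v k * w j)) = 0"
    using dual_on_orth[OF z] by simp
  then show "(\<Sum>j\<in>insert k J. (z(k := - (\<Sum>i\<in>J. z i * w i))) j * v j) = 0"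
    by (simp only: sum_insert_pivot[OF assms(1,2)])
qed

lemma dual_on_insert_of_vanishing:
  assumes "finite J" and "k \<notin> J" and z: "z \<in> dual_on J V" and V: "\<forall>v\<in>V. v k = 0"
  shows "z \<in> dual_on (insert k J) V"
  unfolding dual_on_def
proof (intro CollectI conjI allI impI ballI)
  fix j assume "j \<notin> insert k J"
  then show "z j = 0" using dual_on_vanishes[OF z] by simp
next
  fix v assume "v \<in> V"
  then show "(\<Sum>j\<in>insert k J. z j * v j) = 0"
    using assms(1,2) V dual_on_orth[OF z] by simp
qed

lemma dual_on_separates_by_coordinate:
  assumes "finite J" and "k \<in> J" and "\<forall>v\<in>V. v k = 0" and "x k \<noteq> 0"
  shows "\<exists>z\<in>dual_on J V. (\<Sum>j\<in>J. z j * x j) \<noteq> 0"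
proof
  define z :: "nat \<Rightarrow> 'a" where "z = (\<lambda>j. if j = k then 1 else 0)"
  have sum_z: "(\<Sum>j\<in>J. z j * u j) = u k" for u
  proof -
    have "(\<Sum>j\<in>J. z j * u j) = (\<Sum>j\<in>J. if j = k then u j else 0)"
      by (rule sum.cong) (simp_all add: z_def)
    then show ?thesis
      using assms(1,2) by simp
  qed
  show "z \<in> dual_on J V"
    using assms(2,3) unfolding dual_on_def by (simp add: sum_z) (simp add: z_def)
  show "(\<Sum>j\<in>J. z j * x j) \<noteq> 0"
    using assms(4) by (simp add: sum_z)
qed

lemma is_code_coord_kernel: "is_code n V \<Longrightarrow> is_code n {v \<in> V. v k = 0}"
  by (auto simp: is_code_def)

lemma eliminate_coord_mem_vecs_on:
  fixes x w :: "nat \<Rightarrow> 'a::ring_1"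
  assumes "x \<in> vecs_on (insert k J)" and "w \<in> vecs_on (insert k J)" and "w k = 1"
  shows "(\<lambda>j. x j - x k * w j) \<in> vecs_on J"
proof -
  have "x j - x k * w j = 0" if "j \<notin> J" for j
    using assms that by (cases "j = k") (auto simp: vecs_on_def)
  then show ?thesis
    by (simp add: vecs_on_def)
qed

lemma dual_on_separates:
  fixes V :: "(nat \<Rightarrow> 'a::field) set"
  assumes "finite J" and "is_code n V" and "V \<subseteq> vecs_on J" and "x \<in> vecs_on J" and "x \<notin> V"
  shows "\<exists>z\<in>dual_on J V. (\<Sum>j\<in>J. z j * x j) \<noteq> 0"
  using assms
proof (induction J arbitrary: V x rule: finite_induct)
  case empty
  then have "x = (\<lambda>_. 0)" by (auto simp: vecs_on_def)
  with empty.prems show ?case using is_code_zero by blast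
next
  case (insert k J)
  note V = insert.prems(1)
  show ?case
  proof (cases "\<exists>v\<in>V. v k \<noteq> 0")
    case True
    then obtain v0 where v0: "v0 \<in> V" "v0 k \<noteq> 0" by blast
    define w where "w = (\<lambda>j. inverse (v0 k) * v0 j)"
    have w: "w \<in> V" "w k = 1"
      unfolding w_def using is_code_smult[OF V v0(1)] v0(2) by auto
    define x' where "x' = (\<lambda>j. x j - x k * w j)"
    have "(\<lambda>j. x' j + x k * w j) \<notin> V"
      using insert.prems(4) by (simp add: x'_def)
    then have "x' \<notin> {v \<in> V. v k = 0}"
      using V w(1) is_code_add_smult by blast
    moreover have "{v \<in> V. v k = 0} \<subseteq> vecs_on J"
      using insert.prems(2) by (auto simp: vecs_on_def)
    moreover have "x' \<in> vecs_on J"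
      unfolding x'_def using insert.prems(2,3) w by (intro eliminate_coord_mem_vecs_on) auto
    ultimately obtain z where z: "z \<in> dual_on J {v \<in> V. v k = 0}" "(\<Sum>j\<in>J. z j * x' j) \<noteq> 0"
      using insert.IH is_code_coord_kernel[OF V] by blast
    show ?thesis
    proof
      show "z(k := - (\<Sum>i\<in>J. z i * w i)) \<in> dual_on (insert k J) V"
        using dual_on_insert_pivot[OF insert.hyps V w z(1)] .
      show "(\<Sum>j\<in>insert k J. (z(k := - (\<Sum>i\<in>J. z i * w i))) j * x j) \<noteq> 0"
        using z(2) unfolding sum_insert_pivot[OF insert.hyps] x'_def .
    qed
  next
    case False
    then have V_k: "\<forall>v\<in>V. v k = 0" by blast
    show ?thesis
    proof (cases "x k = 0")
      case True
      have "v \<in> vecs_on J" if "v \<in> insert x V" "v k = 0" for v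
        using that insert.prems(2,3) by (auto simp: vecs_on_def)
      then have "V \<subseteq> vecs_on J" "x \<in> vecs_on J"
        using V_k True by auto
      then obtain z where z: "z \<in> dual_on J V" "(\<Sum>j\<in>J. z j * x j) \<noteq> 0"
        using insert.IH V insert.prems(4) by blast
      show ?thesis
      proof
        show "z \<in> dual_on (insert k J) V"
          using insert.hyps z(1) V_k by (rule dual_on_insert_of_vanishing)
        show "(\<Sum>j\<in>insert k J. z j * x j) \<noteq> 0"
          using insert.hyps True z(2) by simp
      qed
    next
      case False
      then show ?thesis
        using dual_on_separates_by_coordinate[of "insert k J"] insert.hyps(1) V_k by blast
    qed
  qed
qed

lemma inner_n_eq_sum_on:
  assumes "I \<subseteq> {..<n}" and "z \<in> vecs_on I"
  shows "inner_n n z a = (\<Sum>j\<in>I. z j * a j)"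
  unfolding inner_n_def
  using assms by (intro sum.mono_neutral_right) (auto simp: vecs_on_def)

lemma punct_subset_vecs_on: "punct I A \<subseteq> vecs_on I"
  by (auto simp: punct_eq_image_proj_on proj_on_in_vecs_on)

lemma is_code_punct:
  assumes "is_code n A" and "I \<subseteq> {..<n}"
  shows "is_code n (punct I A)"
proof -
  have lin: "(\<lambda>j. u j + c * v j) \<in> punct I A" if uv: "u \<in> punct I A" "v \<in> punct I A" for u v c
  proof -
    obtain a b where ab: "a \<in> A" "b \<in> A" "u = proj_on I a" "v = proj_on I b"
      using uv unfolding punct_eq_image_proj_on by blast
    then have "(\<lambda>j. u j + c * v j) = proj_on I (\<lambda>j. a j + c * b j)"
      by (auto simp: proj_on_def)
    then show ?thesis
      using is_code_add_smult[OF assms(1) ab(1,2)] unfolding punct_eq_image_proj_on by (rule image_eqI)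
  qed
  have "(\<lambda>_. 0) = proj_on I (\<lambda>_. 0)"
    by (simp add: proj_on_def)
  then have zero: "(\<lambda>_. 0) \<in> punct I A"
    using is_code_zero[OF assms(1)] unfolding punct_eq_image_proj_on by (rule image_eqI)
  have "punct I A \<subseteq> vecs n"
    using punct_subset_vecs_on assms(2) by (fastforce simp: vecs_on_def vecs_def)
  moreover have "(\<lambda>j. u j + v j) \<in> punct I A" if "u \<in> punct I A" "v \<in> punct I A" for u v
    using lin[OF that, of 1] by simp
  moreover have "(\<lambda>j. c * v j) \<in> punct I A" if "v \<in> punct I A" for v c
    using lin[OF zero that, of c] by simp
  ultimately show ?thesis
    using zero by (simp add: is_code_def)
qed

lemma weight_le_card:
  assumes "finite I" and "z \<in> vecs_on I"
  shows "weight n z \<le> card I"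
  unfolding weight_def using assms by (intro card_mono) (auto simp: vecs_on_def)

lemma mindist_le_weight:
  assumes "z \<in> X" and "z \<noteq> (\<lambda>_. 0)"
  shows "mindist n X \<le> enat (weight n z)"
  unfolding mindist_def using assms by (intro INF_lower) auto

lemma dual_on_punct_subset_dual:
  assumes "I \<subseteq> {..<n}"
  shows "dual_on I (punct I A) \<subseteq> dual n A"
proof
  fix z assume z: "z \<in> dual_on I (punct I A)"
  then have z_vecs: "z \<in> vecs_on I"
    using dual_on_subset_vecs_on by blast
  have "inner_n n z a = 0" if "a \<in> A" for a
  proof -
    have "inner_n n z a = (\<Sum>j\<in>I. z j * proj_on I a j)"
      using inner_n_eq_sum_on[OF assms z_vecs] by (simp add: proj_on_def)
    also have "\<dots> = 0"
      using z that by (intro dual_on_orth) (auto simp: punct_eq_image_proj_on)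
    finally show ?thesis .
  qed
  moreover have "z \<in> vecs n"
    using z_vecs assms by (fastforce simp: vecs_on_def vecs_def)
  ultimately show "z \<in> dual n A"
    by (simp add: dual_def)
qed

lemma vecs_on_subset_punct:
  fixes A :: "(nat \<Rightarrow> 'a::field) set"
  assumes A: "is_code n A" and md: "enat t < mindist n (dual n A)"
    and I: "I \<subseteq> {..<n}" "card I \<le> t"
  shows "vecs_on I \<subseteq> punct I A"
proof
  fix x :: "nat \<Rightarrow> 'a" assume x: "x \<in> vecs_on I"
  show "x \<in> punct I A"
  proof (rule ccontr)
    assume "x \<notin> punct I A"
    moreover have "finite I"
      using I(1) finite_subset by blast
    ultimately obtain z where z: "z \<in> dual_on I (punct I A)" "(\<Sum>j\<in>I. z j * x j) \<noteq> 0"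
      using dual_on_separates is_code_punct[OF A I(1)] punct_subset_vecs_on x by blast
    have "mindist n (dual n A) \<le> enat (weight n z)"
    proof (rule mindist_le_weight)
      show "z \<in> dual n A" using z(1) dual_on_punct_subset_dual[OF I(1)] by blast
      show "z \<noteq> (\<lambda>_. 0)" using z(2) by auto
    qed
    also have "weight n z \<le> t"
      using weight_le_card[OF \<open>finite I\<close>] z(1) dual_on_subset_vecs_on I(2) by (meson le_trans subsetD)
    finally show False
      using md by simp
  qed
qed

lemma punct_eq_by_proj_on:
  assumes "vecs_on I \<subseteq> punct I A" and "M \<subseteq> A" and "D \<subseteq> vecs_on I"
    and "\<And>a. a \<in> A \<Longrightarrow> a \<in> M \<longleftrightarrow> proj_on I a \<in> D"
  shows "punct I M = D"
proof
  show "punct I M \<subseteq> D"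
    using assms(2,4) by (auto simp: punct_eq_image_proj_on)
  show "D \<subseteq> punct I M"
  proof
    fix x assume "x \<in> D"
    then obtain a where "a \<in> A" "x = proj_on I a"
      using assms(1,3) by (auto simp: punct_eq_image_proj_on)
    with \<open>x \<in> D\<close> assms(4) show "x \<in> punct I M"
      by (auto simp: punct_eq_image_proj_on)
  qed
qed

lemma proj_on_mem_dual_on_punct_iff:
  "proj_on I a \<in> dual_on I (punct I (star E ` W)) \<longleftrightarrow> (\<forall>v\<in>W. (\<Sum>j\<in>I. a j * E j * v j) = 0)"
  unfolding dual_on_def punct_eq_image_proj_on proj_on_def star_def by (auto simp: mult.assoc cong: sum.cong)

lemma inner_star_split:
  assumes "I \<subseteq> {..<n}" and "\<forall>j<n. Y j = X j + E j" and "E \<in> vecs_on I"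
  shows "inner_n n (star a Y) v = inner_n n (star a X) v + (\<Sum>j\<in>I. a j * E j * v j)"
proof -
  have "inner_n n (star a Y) v = inner_n n (star a X) v + inner_n n (star a E) v"
    using assms(2) by (simp add: inner_n_def star_def sum.distrib[symmetric] algebra_simps)
  also have "inner_n n (star a E) v = (\<Sum>j\<in>I. a j * E j * v j)"
    unfolding inner_n_def star_def
    using assms(1,3) by (intro sum.mono_neutral_right) (auto simp: vecs_on_def)
  finally show ?thesis .
qed

lemma orth_iff_proj_on_mem_dual_on:
  assumes "I \<subseteq> {..<n}" and "\<forall>j<n. Y j = X j + E j" and "E \<in> vecs_on I"
    and "\<forall>v\<in>W. inner_n n (star a X) v = 0"
  shows "(\<forall>v\<in>W. inner_n n (star a Y) v = 0) \<longleftrightarrow> proj_on I a \<in> dual_on I (punct I (star E ` W))"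
proof -
  have "inner_n n (star a Y) v = (\<Sum>j\<in>I. a j * E j * v j)" if "v \<in> W" for v
    using inner_star_split[OF assms(1-3)] assms(4) that by simp
  then show ?thesis
    by (simp add: proj_on_mem_dual_on_punct_iff)
qed

lemma star_mem_starset: "a \<in> A \<Longrightarrow> b \<in> B \<Longrightarrow> star a b \<in> starset n A B"
  unfolding starset_def lspan_def by blast

lemma inner_star_swap: "inner_n n (star a b) c = inner_n n (star a c) b"
  by (simp add: inner_n_def star_def ac_simps)

lemma inner_star_codeword_eq_0:
  assumes "starset n A B \<subseteq> dual n C" and "a \<in> A" and "b \<in> B" and "c \<in> C"
  shows "inner_n n (star a c) b = 0"
proof -
  have "star a b \<in> dual n C"
    using assms(1-3) star_mem_starset by blast
  with assms(4) have "inner_n n (star a b) c = 0"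
    unfolding dual_def by blast
  then show ?thesis
    by (subst inner_star_swap)
qed

lemma vpow_1: "c \<in> vecs n \<Longrightarrow> vpow n c 1 = c"
  by (auto simp: vpow_def vecs_def)

lemma vpow_Suc: "vpow n c (Suc k) = star c (vpow n c k)"
  by (simp add: vpow_def star_def fun_eq_iff)

lemma vpow_mem_cpow:
  assumes "C \<subseteq> vecs n" and "c \<in> C" and "1 \<le> k"
  shows "vpow n c k \<in> cpow n C k"
  using assms(3)
proof (induction k rule: nat_induct_at_least)
  case base
  have "vpow n c 1 = c"
    using assms(1,2) vpow_1 by blast
  then show ?case
    using assms(2) by simp
next
  case (Suc k)
  then obtain k' where "k = Suc k'" by (cases k) auto
  with Suc.IH show ?case
    using assms(2) by (simp add: vpow_Suc star_mem_starset)
qed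

lemma inner_star_vpow_Wsp_eq_0:
  assumes "starset n A B \<subseteq> dual n C" and "A \<subseteq> vecs n" and "C \<subseteq> vecs n"
    and "a \<in> A" and "c \<in> C" and "2 \<le> i" and "v \<in> Wsp n C B i"
  shows "inner_n n (star a (vpow n c i)) v = 0"
proof -
  have "star a c \<in> dual n B"
    using assms(1,2,4,5) inner_star_codeword_eq_0
    by (fastforce simp: dual_def vecs_def star_def)
  moreover have "vpow n c (i - 1) \<in> cpow n C (i - 1)"
    using assms(3,5,6) by (intro vpow_mem_cpow) auto
  ultimately have "star (star a c) (vpow n c (i - 1)) \<in> starset n (dual n B) (cpow n C (i - 1))"
    by (rule star_mem_starset)
  with assms(7) have "inner_n n v (star (star a c) (vpow n c (i - 1))) = 0"
    unfolding Wsp_def dual_def by blast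
  moreover have "star (star a c) (vpow n c (i - 1)) = star a (vpow n c i)"
    using assms(6) vpow_Suc[of n c "i - 1"] by (simp add: star_def fun_eq_iff mult.assoc)
  ultimately show ?thesis
    by (simp add: inner_n_def mult.commute)
qed

lemma vpow_add_eq_vpow_add_epow:
  assumes "j < n"
  shows "vpow n (\<lambda>j. c j + e j) i j = vpow n c i j + epow n c e i j"
proof -
  have "(c j + e j) ^ i = (\<Sum>h\<le>i. of_nat (i choose h) * e j ^ h * c j ^ (i - h))"
    using binomial_ring[of "e j" "c j" i] by (simp add: add.commute)
  also have "\<dots> = c j ^ i + (\<Sum>h=1..i. of_nat (i choose h) * c j ^ (i - h) * e j ^ h)"
    by (simp add: atMost_atLeast0 sum.atLeast_Suc_atMost ac_simps)
  finally show ?thesis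
    using assms by (simp add: vpow_def epow_def)
qed

lemma epow_mem_vecs_on_supp: "epow n c e i \<in> vecs_on (supp n e)"
  by (auto simp: vecs_on_def supp_def epow_def vpow_def intro!: sum.neutral)

theorem mainTheorem8:
  fixes n l t :: nat and C A B :: "(nat \<Rightarrow> 'a::{field,finite}) set"
    and c e y :: "nat \<Rightarrow> 'a"
  assumes "2 \<le> l"
    and "is_code n C"
    and "power_ELP n C A B l t"
    and "c \<in> C" and "e \<in> vecs n" and "weight n e = t"
    and "y = (\<lambda>j. c j + e j)"
  defines "I \<equiv> supp n e"
    and "M1 \<equiv> {a \<in> A. \<forall>b\<in>B. inner_n n (star a y) b = 0}"
    and "Mi \<equiv> (\<lambda>i. {a \<in> A. \<forall>v\<in>Wsp n C B i. inner_n n (star a (vpow n y i)) v = 0})"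
  shows "punct I (M1 \<inter> (\<Inter>i\<in>{2..l}. Mi i)) =
     dual_on I (punct I (star (epow n c e 1) ` B)) \<inter>
     (\<Inter>i\<in>{2..l}. dual_on I (punct I (star (epow n c e i) ` Wsp n C B i)))"
proof (rule punct_eq_by_proj_on)
  have A: "is_code n A" and AB: "starset n A B \<subseteq> dual n C"
    and md: "enat t < mindist n (dual n A)"
    using assms(3) by (auto simp: power_ELP_def)
  have I: "I \<subseteq> {..<n}" "card I = t"
    using assms(6) by (auto simp: I_def supp_def weight_def)
  show "vecs_on I \<subseteq> punct I A"
    using vecs_on_subset_punct[OF A md I(1)] I(2) by simp
  have E: "epow n c e i \<in> vecs_on I" for i
    unfolding I_def by (rule epow_mem_vecs_on_supp)
  have y1: "\<forall>j<n. y j = c j + epow n c e 1 j"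
    using assms(7) by (simp add: epow_def vpow_def)
  have yi: "\<forall>j<n. vpow n y i j = vpow n c i j + epow n c e i j" for i
    using assms(7) vpow_add_eq_vpow_add_epow by blast
  have "A \<subseteq> vecs n" "C \<subseteq> vecs n"
    using A assms(2) by (simp_all add: is_code_def)
  note orth_Wsp = inner_star_vpow_Wsp_eq_0[OF AB this _ assms(4)]
  fix a assume a: "a \<in> A"
  have "a \<in> M1 \<longleftrightarrow> proj_on I a \<in> dual_on I (punct I (star (epow n c e 1) ` B))"
    unfolding M1_def using orth_iff_proj_on_mem_dual_on[OF I(1) y1 E]
      inner_star_codeword_eq_0[OF AB a _ assms(4)] a by simp
  moreover have "a \<in> Mi i \<longleftrightarrow> proj_on I a \<in> dual_on I (punct I (star (epow n c e i) ` Wsp n C B i))"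
    if "i \<in> {2..l}" for i
    unfolding Mi_def using orth_iff_proj_on_mem_dual_on[OF I(1) yi E] orth_Wsp[OF a] a that by simp
  ultimately show "a \<in> M1 \<inter> (\<Inter>i\<in>{2..l}. Mi i) \<longleftrightarrow>
      proj_on I a \<in> dual_on I (punct I (star (epow n c e 1) ` B)) \<inter>
        (\<Inter>i\<in>{2..l}. dual_on I (punct I (star (epow n c e i) ` Wsp n C B i)))"
    by blast
qed (use dual_on_subset_vecs_on in \<open>auto simp: M1_def\<close>)

end
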